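(* If a Sturmian sequence $\epsilon\in\{H,V\}^{\mathbb{Z}}$ is almost symmetric, then so is its derived sequence $\epsilon'$.
   Context: A Sturmian sequence is a biinfinite sequence over two letters that is not eventually periodic and has exactly $n+1$ distinct subwords of each length $n$; in such a sequence one of the letters is isolated (never occurs twice consecutively). The derived sequence $\epsilon'$ is obtained from $\epsilon$ by deleting one occurrence of the non-isolated letter from each maximal block of consecutive occurrences of it. A sequence $\epsilon$ is almost symmetric if there is $N$ with $\epsilon_{N+k}=\epsilon_{N-k-1}$ for all $k\ge1$ and $\epsilon_N\ne\epsilon_{N-1}$. *)

theory Defs
  imports Main
begin

datatype letter = H | V

type_synonym bisequence = "int \<Rightarrow> letter"

definition subword :: "bisequence \<Rightarrow> int \<Rightarrow> nat \<Rightarrow> letter list" where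
  "subword e i n = map (\<lambda>j. e (i + int j)) [0..<n]"

definition eventually_periodic :: "bisequence \<Rightarrow> bool" where
  "eventually_periodic e \<longleftrightarrow> (\<exists>p::int. p > 0 \<and> (\<exists>N. \<forall>k\<ge>N. e (k + p) = e k))"

definition sturmian :: "bisequence \<Rightarrow> bool" where
  "sturmian e \<longleftrightarrow> \<not> eventually_periodic e \<and>
     (\<forall>n. card {subword e i n | i. True} = n + 1)"

definition almost_symmetric :: "bisequence \<Rightarrow> bool" where
  "almost_symmetric e \<longleftrightarrow>
     (\<exists>N::int. (\<forall>k\<ge>1. e (N + k) = e (N - k - 1)) \<and> e N \<noteq> e (N - 1))"

text \<open>e' is the derived sequence of e: b is the non-isolated letter (it occurs twice
  consecutively), one occurrence of b (the first one) is deleted from each maximal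
  block of b's, and the remaining positions are re-indexed increasingly by f.\<close>
definition derived_seq :: "bisequence \<Rightarrow> bisequence \<Rightarrow> bool" where
  "derived_seq e e' \<longleftrightarrow>
     (\<exists>b f. (\<exists>i. e i = b \<and> e (i + 1) = b) \<and> strict_mono (f :: int \<Rightarrow> int) \<and>
        range f = {i. \<not> (e i = b \<and> e (i - 1) \<noteq> b)} \<and>
        (\<forall>k. e' k = e (f k)))"

end

theory Submission
  imports Defs
begin

text \<open>In a Sturmian sequence only one letter can occur twice in a row: otherwise all four
  words of length 2 would occur. Let b be that letter and a the isolated one. The derived
  sequence keeps the positions i with e i = a or e (i - 1) = b. The reflection
  x \<mapsto> 2N - 1 - x about the centre N of symmetry maps blocks of b's onto blocks of b's,
  sending the deleted first b of a block to the kept last one; shifting kept b's by one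
  therefore gives an order-reversing bijection between the kept positions right of the
  centre and those left of it that preserves letters. Since a strictly monotone
  reindexing turns such a bijection into the reflection k \<mapsto> 2A - 1 - k of indices, the
  derived sequence is almost symmetric about the index A of the first kept position
  after N - 1.\<close>

section \<open>Words of length two in Sturmian sequences\<close>

lemma letter_eq_if_neq: "x \<noteq> y \<Longrightarrow> z \<noteq> x \<Longrightarrow> z = (y::letter)"
  by (cases x; cases y; cases z) auto

lemma subword_2: "subword e i 2 = [e i, e (i + 1)]"
  by (simp add: subword_def numeral_2_eq_2)

lemma eventually_periodic_if_absorbing:
  assumes absorbing: "\<And>j. e j = x \<Longrightarrow> e (j + 1) = x" and "e i = x"
  shows "eventually_periodic e"
proof -
  have "e k = x" if "k \<ge> i" for k
    using that by (induction k rule: int_ge_induct) (use assms in auto)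
  then have "\<forall>k\<ge>i. e (k + 1) = e k"
    using absorbing by auto
  then show ?thesis
    unfolding eventually_periodic_def by (intro exI[of _ 1]) auto
qed

lemma sturmian_leaves_letter:
  assumes "sturmian e" and "e i = x"
  obtains j where "e j = x" and "e (j + 1) \<noteq> x"
  using assms eventually_periodic_if_absorbing[of e x i] unfolding sturmian_def by blast

lemma sturmian_doubled_letter_unique:
  assumes st: "sturmian e"
    and "e i = x" "e (i + 1) = x" and "e j = y" "e (j + 1) = y"
  shows "x = y"
proof (rule ccontr)
  assume xy: "x \<noteq> y"
  let ?S = "{subword e i 2 | i. True}"
  have card: "card ?S = 3"
    using st unfolding sturmian_def by auto
  then have "finite ?S"
    by (intro card_ge_0_finite) simp
  obtain i' where "e i' = x" "e (i' + 1) = y"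
    using sturmian_leaves_letter[OF st \<open>e i = x\<close>] letter_eq_if_neq[OF xy] by metis
  moreover obtain j' where "e j' = y" "e (j' + 1) = x"
    using sturmian_leaves_letter[OF st \<open>e j = y\<close>] letter_eq_if_neq[OF xy[symmetric]] by metis
  ultimately have "{[x, x], [y, y], [x, y], [y, x]} \<subseteq> ?S"
    using assms by (auto simp del: One_nat_def) (metis subword_2)+
  then have "card {[x, x], [y, y], [x, y], [y, x]} \<le> 3"
    using card_mono[OF \<open>finite ?S\<close>] card by metis
  with xy show False
    by simp
qed

section \<open>Order-reversing bijections under a monotone reindexing\<close>

lemma antitone_onto_lessThan:
  fixes h :: "int \<Rightarrow> int"
  assumes anti: "\<And>k l. 1 \<le> k \<Longrightarrow> k < l \<Longrightarrow> h l < h k"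
    and below: "\<And>k. 1 \<le> k \<Longrightarrow> h k < c"
    and onto: "\<And>m. m < c \<Longrightarrow> \<exists>k\<ge>1. h k = m"
    and "1 \<le> k"
  shows "h k = c - k"
  using \<open>1 \<le> k\<close>
proof (induction k rule: int_ge_induct)
  case base
  obtain k where "k \<ge> 1" "h k = c - 1"
    using onto[of "c - 1"] by auto
  then have "h k \<le> h 1"
    using anti[of 1 k] by (cases "k = 1") auto
  then show ?case
    using below[of 1] \<open>h k = c - 1\<close> by simp
next
  case (step k)
  obtain l where l: "l \<ge> 1" "h l = c - k - 1"
    using onto[of "c - k - 1"] step(1) by auto
  have "\<not> l \<le> k"
    using anti[of l k] l step by (cases "l = k") auto
  then have "h l \<le> h (k + 1)"
    using anti[of "k + 1" l] step(1) by (cases "l = k + 1") auto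
  moreover have "h (k + 1) < h k"
    using anti step(1) by simp
  ultimately show ?case
    using l step by simp
qed

lemma strict_mono_predecessor:
  fixes f :: "int \<Rightarrow> int"
  assumes "strict_mono f" and "y \<in> range f" and "y < f A"
    and "\<And>z. z \<in> range f \<Longrightarrow> z < f A \<Longrightarrow> z \<le> y"
  shows "f (A - 1) = y"
proof -
  obtain j where j: "y = f j"
    using assms(2) by blast
  then have "j \<le> A - 1"
    using assms(1,3) by (simp add: strict_mono_less)
  then have "y \<le> f (A - 1)"
    using assms(1) j by (simp add: strict_mono_less_eq)
  moreover have "f (A - 1) \<le> y"
    using assms(1,4) by (simp add: strict_mono_less)
  ultimately show ?thesis
    by simp
qed

lemma strict_mono_antitone_reflection:
  fixes f \<psi> :: "int \<Rightarrow> int"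
  assumes sm: "strict_mono f"
    and into: "\<And>j. j \<in> range f \<Longrightarrow> f A < j \<Longrightarrow> \<psi> j \<in> range f \<and> \<psi> j < f (A - 1)"
    and anti: "\<And>i j. i \<in> range f \<Longrightarrow> j \<in> range f \<Longrightarrow> f A < i \<Longrightarrow> i < j \<Longrightarrow> \<psi> j < \<psi> i"
    and onto: "\<And>x. x \<in> range f \<Longrightarrow> x < f (A - 1) \<Longrightarrow> \<exists>j\<in>range f. f A < j \<and> \<psi> j = x"
    and "1 \<le> k"
  shows "\<psi> (f (A + k)) = f (A - 1 - k)"
proof -
  define h where "h k = inv f (\<psi> (f (A + k)))" for k
  have right: "f A < f (A + k)" if "1 \<le> k" for k
    using sm that by (simp add: strict_mono_less)
  have f_h: "f (h k) = \<psi> (f (A + k))" if "1 \<le> k" for k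
    unfolding h_def using into[OF _ right[OF that]] by (simp add: f_inv_into_f)
  have "h k = A - 1 - k"
  proof (rule antitone_onto_lessThan[OF _ _ _ \<open>1 \<le> k\<close>])
    fix k l :: int
    assume "1 \<le> k" "k < l"
    then have "f (h l) < f (h k)"
      using anti right sm f_h by (simp add: strict_mono_less)
    then show "h l < h k"
      using sm by (simp add: strict_mono_less)
  next
    fix k :: int
    assume "1 \<le> k"
    then have "f (h k) < f (A - 1)"
      using f_h into right by auto
    then show "h k < A - 1"
      using sm by (simp add: strict_mono_less)
  next
    fix m
    assume "m < A - 1"
    then obtain j where "f A < f j" "\<psi> (f j) = f m"
      using onto[of "f m"] sm by (auto simp: strict_mono_less)
    moreover from this have "A < j"
      using sm by (simp add: strict_mono_less)
    ultimately have "h (j - A) = m"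
      unfolding h_def using strict_mono_on_imp_inj_on[OF sm] by simp
    with \<open>A < j\<close> show "\<exists>k\<ge>1. h k = m"
      by (intro exI[of _ "j - A"]) auto
  qed
  then show ?thesis
    using f_h[OF \<open>1 \<le> k\<close>] by simp
qed

section \<open>Kept positions of an almost symmetric sequence\<close>

locale symmetric_with_isolated_letter =
  fixes e :: bisequence and a b :: letter and N :: int
  assumes letters: "a \<noteq> b"
    and isolated: "\<not> (e i = a \<and> e (i + 1) = a)"
    and symmetric: "k \<ge> 1 \<Longrightarrow> e (N + k) = e (N - k - 1)"
    and centre: "e N \<noteq> e (N - 1)"
begin

definition kept :: "int \<Rightarrow> bool" where
  "kept i \<longleftrightarrow> e i = a \<or> e (i - 1) = b"

definition next_kept :: int where
  "next_kept = (if e N = a then N else N + 1)"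

text \<open>The reflection x \<mapsto> 2N - 1 - x, shifted by one on b's so that the kept last b of a
  block goes to the kept last b of the reflected block.\<close>

definition mirror :: "int \<Rightarrow> int" where
  "mirror j = (if e j = a then 2 * N - 1 - j else 2 * N - j)"

lemma other_letter: "x \<noteq> a \<Longrightarrow> x = b"
  using letter_eq_if_neq letters by blast

lemma reflect: "x \<noteq> N - 1 \<Longrightarrow> x \<noteq> N \<Longrightarrow> e (2 * N - 1 - x) = e x"
  using symmetric[of "x - N"] symmetric[of "N - 1 - x"] by (cases "x \<le> N") (auto simp: algebra_simps)

lemma kept_b_after_b: "kept j \<Longrightarrow> e j = b \<Longrightarrow> e (j - 1) = b"
  unfolding kept_def using letters by auto

lemma before_centre: "e (N - 2) = b"
proof (cases "e N = a")
  case True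
  then have "e (N + 1) \<noteq> a"
    using isolated[of N] by simp
  then show ?thesis
    using reflect[of "N + 1"] other_letter by (simp add: algebra_simps)
next
  case False
  then have "e (N - 1) = a"
    using centre other_letter by metis
  then show ?thesis
    using isolated[of "N - 2"] other_letter by (simp add: algebra_simps)
qed

lemma kept_centre: "kept (N - 1)"
  using before_centre by (simp add: kept_def algebra_simps)

lemma kept_next_kept: "kept next_kept"
  unfolding kept_def next_kept_def using other_letter by auto

lemma next_kept_gt: "N - 1 < next_kept"
  by (simp add: next_kept_def)

lemma not_kept_between:
  assumes "N - 1 < z" and "z < next_kept"
  shows "\<not> kept z"
proof -
  have "z = N" "e N \<noteq> a"
    using assms by (auto simp: next_kept_def split: if_splits)
  then show ?thesis
    using centre other_letter[of "e N"] by (auto simp: kept_def)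
qed

lemma next_kept_letter: "e next_kept \<noteq> e (N - 1)"
  using centre before_centre reflect[of "N + 1"] other_letter
  by (auto simp: next_kept_def algebra_simps)

lemma mirror_right:
  assumes "kept j" and "next_kept < j"
  shows "kept (mirror j) \<and> mirror j < N - 1 \<and> e (mirror j) = e j"
proof (cases "e j = a")
  case True
  with assms show ?thesis
    using reflect[of j] by (auto simp: mirror_def kept_def next_kept_def split: if_splits)
next
  case False
  then have b: "e j = b" "e (j - 1) = b"
    using other_letter kept_b_after_b[OF assms(1)] by auto
  moreover have "j \<noteq> N + 1 \<or> e N \<noteq> a"
    using b letters by auto
  ultimately have "N + 2 \<le> j"
    using assms(2) by (auto simp: next_kept_def split: if_splits)
  then show ?thesis
    using b reflect[of j] reflect[of "j - 1"] letters
    by (auto simp: mirror_def kept_def algebra_simps)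
qed

lemma mirror_antitone:
  assumes "kept i" and "kept j" and "i < j"
  shows "mirror j < mirror i"
proof -
  have "\<not> (e i = a \<and> e j = b \<and> j = i + 1)"
    using kept_b_after_b[OF assms(2)] letters by auto
  with assms(3) show ?thesis
    using other_letter[of "e i"] other_letter[of "e j"] by (auto simp: mirror_def)
qed

lemma mirror_onto:
  assumes "kept x" and "x < N - 1"
  shows "\<exists>j. kept j \<and> next_kept < j \<and> mirror j = x"
proof (cases "e x = a")
  case True
  then have "x \<noteq> N - 2"
    using before_centre letters by auto
  with True assms show ?thesis
    using reflect[of x]
    by (intro exI[of _ "2 * N - 1 - x"]) (auto simp: mirror_def kept_def next_kept_def)
next
  case False
  then have "e x = b" "e (x - 1) = b"
    using other_letter kept_b_after_b[OF assms(1)] by auto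
  with assms show ?thesis
    using reflect[of x] reflect[of "x - 1"] letters
    by (intro exI[of _ "2 * N - x"]) (auto simp: mirror_def kept_def next_kept_def algebra_simps)
qed

lemma mirror_reindexed:
  fixes f :: "int \<Rightarrow> int"
  assumes sm: "strict_mono f" and range_f: "range f = Collect kept"
    and A: "f A = next_kept" and A_pred: "f (A - 1) = N - 1" and "1 \<le> k"
  shows "mirror (f (A + k)) = f (A - 1 - k)"
proof (rule strict_mono_antitone_reflection[OF sm _ _ _ \<open>1 \<le> k\<close>])
  show "mirror j \<in> range f \<and> mirror j < f (A - 1)" if "j \<in> range f" "f A < j" for j
    using mirror_right[of j] that by (simp add: range_f A A_pred)
  show "mirror j < mirror i" if "i \<in> range f" "j \<in> range f" "i < j" for i j
    using mirror_antitone[of i j] that by (simp add: range_f)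
  show "\<exists>j\<in>range f. f A < j \<and> mirror j = x" if "x \<in> range f" "x < f (A - 1)" for x
    using mirror_onto[of x] that by (simp add: range_f A A_pred)
qed

lemma almost_symmetric_reindexed:
  fixes f :: "int \<Rightarrow> int"
  assumes sm: "strict_mono f" and range_f: "range f = Collect kept"
  shows "almost_symmetric (e \<circ> f)"
proof -
  obtain A where A: "f A = next_kept"
    using kept_next_kept range_f by (metis mem_Collect_eq rangeE)
  have A_pred: "f (A - 1) = N - 1"
  proof (rule strict_mono_predecessor[OF sm])
    show "N - 1 \<in> range f" "N - 1 < f A"
      using kept_centre next_kept_gt by (simp_all add: range_f A)
    show "z \<le> N - 1" if "z \<in> range f" "z < f A" for z
      using not_kept_between[of z] that range_f A by fastforce
  qed
  have "e (f (A + k)) = e (f (A - k - 1))" if "1 \<le> k" for k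
  proof -
    have "next_kept < f (A + k)"
      using A strict_monoD[OF sm, of A "A + k"] that by simp
    then have "e (f (A + k)) = e (mirror (f (A + k)))"
      using mirror_right[of "f (A + k)"] rangeI[of f "A + k"] range_f by auto
    also have "mirror (f (A + k)) = f (A - 1 - k)"
      by (rule mirror_reindexed[OF sm range_f A A_pred that])
    finally show ?thesis
      by (simp add: algebra_simps)
  qed
  then show ?thesis
    unfolding almost_symmetric_def using A A_pred next_kept_letter by (intro exI[of _ A]) auto
qed

end

theorem lemma4p2:
  fixes e e' :: bisequence
  assumes "sturmian e" and "almost_symmetric e" and "derived_seq e e'"
  shows "almost_symmetric e'"
proof -
  obtain N where sym: "\<forall>k\<ge>1. e (N + k) = e (N - k - 1)" and centre: "e N \<noteq> e (N - 1)"
    using assms(2) unfolding almost_symmetric_def by blast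
  obtain b f i where "e i = b" "e (i + 1) = b" and sm: "strict_mono (f :: int \<Rightarrow> int)"
    and range_f: "range f = {i. \<not> (e i = b \<and> e (i - 1) \<noteq> b)}" and e': "\<forall>k. e' k = e (f k)"
    using assms(3) unfolding derived_seq_def by blast
  obtain a where "a \<noteq> b"
    using letter.distinct by (cases b) blast+
  interpret symmetric_with_isolated_letter e a b N
  proof
    show "\<not> (e j = a \<and> e (j + 1) = a)" for j
      using sturmian_doubled_letter_unique[OF assms(1) \<open>e i = b\<close> \<open>e (i + 1) = b\<close>, of j a]
        \<open>a \<noteq> b\<close> by auto
    show "e (N + k) = e (N - k - 1)" if "k \<ge> 1" for k
      using sym that by blast
  qed fact+
  have "kept j \<longleftrightarrow> \<not> (e j = b \<and> e (j - 1) \<noteq> b)" for j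
    using other_letter[of "e j"] letters by (cases "e j = a") (auto simp: kept_def)
  then have "range f = Collect kept"
    using range_f by blast
  then have "almost_symmetric (e \<circ> f)"
    using almost_symmetric_reindexed[OF sm] by blast
  moreover have "e' = e \<circ> f"
    using e' by auto
  ultimately show ?thesis
    by simp
qed

end
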